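(* Consider the spacetime $\mathbb{R}\times\mathbb{R}^3$ with coordinates $(t,x^1,x^2,x^3)$ and metric of signature $(-,+,+,+)$ $$ds^2=-\alpha^2\,dt^2+\delta_{ij}\,(dx^i-\beta^i dt)(dx^j-\beta^j dt),$$ with lapse $\alpha\equiv 1$, flat time-independent spatial metric $\gamma_{ij}=\delta_{ij}$ on every slice $t=\text{const}$, and irrotational shift given by a smooth scalar potential $\Phi(t,x)$ through $\beta_i=-\partial_i\Phi$ (i.e. $\boldsymbol{\beta}^\flat=-d\Phi$ on each slice). Then the stress–energy tensor $T^\mu{}_\nu=G^\mu{}_\nu/\kappa$ of this spacetime is of Hawking–Ellis Type I at every point.
   Context: $G^\mu{}_\nu$ is the mixed Einstein tensor of the metric and $\kappa>0$ is Einstein's coupling constant (zero cosmological constant). A symmetric tensor $T_{\mu\nu}$ at a point, viewed as the linear map $T^\mu{}_\nu$, is of Hawking–Ellis Type I if $T^\mu{}_\nu$ has four real eigenvalues and admits a real timelike eigenvector, equivalently there is an orthonormal frame in which $T^{\hat\mu}{}_{\hat\nu}=\mathrm{diag}(-\varrho,p_1,p_2,p_3)$ with all entries real. *)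

theory Defs
  imports "HOL-Analysis.Analysis"
begin

text \<open>Spacetime points are vectors in real^4; coordinate index 0 is t, indices 1,2,3 are x^1,x^2,x^3.
  Tensor components are indexed by the 4-element type 4.\<close>

type_synonym point = "real^4"
type_synonym idx = 4

definition pd :: "idx \<Rightarrow> (point \<Rightarrow> real) \<Rightarrow> point \<Rightarrow> real" where
  "pd i f p = deriv (\<lambda>s. f (p + s *\<^sub>R axis i 1)) 0"

fun iter_pd :: "idx list \<Rightarrow> (point \<Rightarrow> real) \<Rightarrow> point \<Rightarrow> real" where
  "iter_pd [] f = f"
| "iter_pd (i # is) f = pd i (iter_pd is f)"

definition smooth :: "(point \<Rightarrow> real) \<Rightarrow> bool" where
  "smooth f \<longleftrightarrow> (\<forall>is. (iter_pd is f) differentiable_on UNIV)"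

text \<open>3+1 metric with lapse alpha, shift beta (components beta_k for spatial k, lowered
  with the flat spatial metric delta) and flat spatial metric gamma_ij = delta_ij:
  ds^2 = -alpha^2 dt^2 + delta_ij (dx^i - beta^i dt)(dx^j - beta^j dt).\<close>
definition adm_flat_metric :: "(point \<Rightarrow> real) \<Rightarrow> (point \<Rightarrow> idx \<Rightarrow> real) \<Rightarrow> point \<Rightarrow> real^4^4" where
  "adm_flat_metric \<alpha> \<beta> p = (\<chi> \<mu> \<nu>.
     if \<mu> = 0 \<and> \<nu> = 0 then - (\<alpha> p)\<^sup>2 + (\<Sum>k\<in>UNIV - {0}. (\<beta> p k)\<^sup>2)
     else if \<mu> = 0 then - \<beta> p \<nu>
     else if \<nu> = 0 then - \<beta> p \<mu>
     else if \<mu> = \<nu> then 1 else 0)"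

definition inv_metric :: "(point \<Rightarrow> real^4^4) \<Rightarrow> point \<Rightarrow> real^4^4" where
  "inv_metric g p = matrix_inv (g p)"

definition christoffel :: "(point \<Rightarrow> real^4^4) \<Rightarrow> point \<Rightarrow> idx \<Rightarrow> idx \<Rightarrow> idx \<Rightarrow> real" where
  "christoffel g p l m n = (1/2) * (\<Sum>s\<in>UNIV. inv_metric g p $ l $ s *
      (pd m (\<lambda>q. g q $ s $ n) p + pd n (\<lambda>q. g q $ s $ m) p - pd s (\<lambda>q. g q $ m $ n) p))"

definition riemann :: "(point \<Rightarrow> real^4^4) \<Rightarrow> point \<Rightarrow> idx \<Rightarrow> idx \<Rightarrow> idx \<Rightarrow> idx \<Rightarrow> real" where
  "riemann g p r s m n =
     pd m (\<lambda>q. christoffel g q r n s) p - pd n (\<lambda>q. christoffel g q r m s) p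
     + (\<Sum>l\<in>UNIV. christoffel g p r m l * christoffel g p l n s
                 - christoffel g p r n l * christoffel g p l m s)"

definition ricci :: "(point \<Rightarrow> real^4^4) \<Rightarrow> point \<Rightarrow> idx \<Rightarrow> idx \<Rightarrow> real" where
  "ricci g p s n = (\<Sum>r\<in>UNIV. riemann g p r s r n)"

definition ricci_scalar :: "(point \<Rightarrow> real^4^4) \<Rightarrow> point \<Rightarrow> real" where
  "ricci_scalar g p = (\<Sum>s\<in>UNIV. \<Sum>n\<in>UNIV. inv_metric g p $ s $ n * ricci g p s n)"

definition einstein :: "(point \<Rightarrow> real^4^4) \<Rightarrow> point \<Rightarrow> real^4^4" where
  "einstein g p = (\<chi> m n. ricci g p m n - (1/2) * ricci_scalar g p * g p $ m $ n)"

definition einstein_mixed :: "(point \<Rightarrow> real^4^4) \<Rightarrow> point \<Rightarrow> real^4^4" where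
  "einstein_mixed g p = inv_metric g p ** einstein g p"

definition eta :: "idx \<Rightarrow> idx \<Rightarrow> real" where
  "eta a b = (if a = b then (if a = 0 then -1 else 1) else 0)"

text \<open>Hawking-Ellis type I for the mixed tensor T (T $ mu $ nu = T^mu_nu) w.r.t. metric matrix gm:
  there is an orthonormal frame (columns e_a of E, e_0 timelike) in which
  T^a_b = diag(-rho, p1, p2, p3), all real.\<close>
definition hawking_ellis_type_I :: "real^4^4 \<Rightarrow> real^4^4 \<Rightarrow> bool" where
  "hawking_ellis_type_I gm T \<longleftrightarrow>
     (\<exists>E :: real^4^4. \<exists>ev :: idx \<Rightarrow> real.
        (\<forall>a b. (\<Sum>m\<in>UNIV. \<Sum>n\<in>UNIV. gm $ m $ n * E $ m $ a * E $ n $ b) = eta a b) \<and>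
        (\<forall>a. T *v column a E = ev a *\<^sub>R column a E))"

end

theory Submission
  imports Defs
begin

(* With unit lapse and flat slices, the extrinsic curvature of the slices t = const is the
   Hessian of the potential, K_ij = d_i d_j Phi.  The momentum constraint d_i K^i_j - d_j K^i_i
   therefore vanishes, because third derivatives of the smooth Phi commute.  Hence G^0_j = 0 for
   spatial j and the unit normal n = (1, -grad Phi) is an eigenvector of G^mu_nu.  The vectors
   g-orthogonal to n are those with vanishing time component; on them g is Euclidean and G^mu_nu
   acts by the symmetric block G^i_j, which has an orthonormal eigenbasis (obtained by maximising
   the Rayleigh quotient).  Together with n it is an orthonormal frame diagonalising G^mu_nu. *)

lemma has_real_derivative_along_line:
  fixes f :: "'a::real_normed_vector \<Rightarrow> real"
  assumes "(f has_derivative f') (at (x + s *\<^sub>R v))"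
  shows "((\<lambda>t. f (x + t *\<^sub>R v)) has_real_derivative f' v) (at s)"
proof -
  have "((\<lambda>t. x + t *\<^sub>R v) has_derivative (\<lambda>t. t *\<^sub>R v)) (at s)"
    by (auto intro!: derivative_eq_intros)
  from diff_chain_at[OF this assms]
  have "((\<lambda>t. f (x + t *\<^sub>R v)) has_derivative (\<lambda>t. f' v * t)) (at s)"
    using has_derivative_linear[OF assms] by (simp add: o_def linear_scale mult.commute)
  then show ?thesis
    unfolding has_field_derivative_def .
qed

lemma pd_has_real_derivative:
  fixes f :: "point \<Rightarrow> real"
  assumes "f differentiable_on UNIV"
  shows "((\<lambda>t. f (x + t *\<^sub>R axis k 1)) has_real_derivative pd k f (x + t *\<^sub>R axis k 1)) (at t)"
proof -
  obtain f' where f': "(f has_derivative f') (at (x + t *\<^sub>R axis k 1))"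
    using assms unfolding differentiable_on_eq_differentiable_at[OF open_UNIV] differentiable_def
    by blast
  have "((\<lambda>s. f ((x + t *\<^sub>R axis k 1) + s *\<^sub>R axis k 1)) has_real_derivative f' (axis k 1)) (at 0)"
    using f' by (intro has_real_derivative_along_line) simp
  then have "pd k f (x + t *\<^sub>R axis k 1) = f' (axis k 1)"
    unfolding pd_def by (rule DERIV_imp_deriv)
  with has_real_derivative_along_line[OF f'] show ?thesis by simp
qed

lemmas pd_has_real_derivative_0 = pd_has_real_derivative[where t = 0, simplified]

lemma pd_eqI:
  assumes "((\<lambda>t. f (x + t *\<^sub>R axis k 1)) has_real_derivative D) (at 0)"
  shows "pd k f x = D"
  unfolding pd_def using assms by (rule DERIV_imp_deriv)

lemma pd_const [simp]: "pd k (\<lambda>q. c) = (\<lambda>q. 0)"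
  by (rule ext, rule pd_eqI) simp

context
  fixes f g :: "point \<Rightarrow> real"
  assumes f: "f differentiable_on UNIV" and g: "g differentiable_on UNIV"
begin

lemma pd_add [simp]: "pd k (\<lambda>q. f q + g q) = (\<lambda>q. pd k f q + pd k g q)"
  by (rule ext, rule pd_eqI) (intro DERIV_add pd_has_real_derivative_0 f g)

lemma pd_diff [simp]: "pd k (\<lambda>q. f q - g q) = (\<lambda>q. pd k f q - pd k g q)"
  by (rule ext, rule pd_eqI) (intro DERIV_diff pd_has_real_derivative_0 f g)

lemma pd_mult [simp]: "pd k (\<lambda>q. f q * g q) = (\<lambda>q. pd k f q * g q + f q * pd k g q)"
  by (rule ext, rule pd_eqI) (auto intro!: derivative_eq_intros pd_has_real_derivative_0 f g)

end

lemma pd_minus [simp]: "f differentiable_on UNIV \<Longrightarrow> pd k (\<lambda>q. - f q) = (\<lambda>q. - pd k f q)"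
  by (rule ext, rule pd_eqI) (intro DERIV_minus pd_has_real_derivative_0)

definition mixed_difference :: "idx \<Rightarrow> idx \<Rightarrow> real \<Rightarrow> (point \<Rightarrow> real) \<Rightarrow> point \<Rightarrow> real" where
  "mixed_difference i j h f p =
     f (p + h *\<^sub>R axis i 1 + h *\<^sub>R axis j 1) - f (p + h *\<^sub>R axis i 1) - f (p + h *\<^sub>R axis j 1) + f p"

lemma mixed_difference_commute: "mixed_difference i j h f p = mixed_difference j i h f p"
  unfolding mixed_difference_def by (simp add: ac_simps)

lemma mixed_difference_mvt:
  fixes f :: "point \<Rightarrow> real"
  assumes f: "f differentiable_on UNIV" and fi: "pd i f differentiable_on UNIV" and "h > 0"
  obtains \<sigma> \<tau> where "0 < \<sigma>" "\<sigma> < h" "0 < \<tau>" "\<tau> < h"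
    and "mixed_difference i j h f p = h * h * pd j (pd i f) (p + \<sigma> *\<^sub>R axis i 1 + \<tau> *\<^sub>R axis j 1)"
proof -
  define \<phi> where "\<phi> s = f (p + h *\<^sub>R axis j 1 + s *\<^sub>R axis i 1) - f (p + s *\<^sub>R axis i 1)" for s
  define \<phi>' where "\<phi>' s = pd i f (p + h *\<^sub>R axis j 1 + s *\<^sub>R axis i 1) - pd i f (p + s *\<^sub>R axis i 1)" for s
  have "(\<phi> has_real_derivative \<phi>' s) (at s)" for s
    unfolding \<phi>_def \<phi>'_def by (intro DERIV_diff pd_has_real_derivative f)
  then obtain \<sigma> where \<sigma>: "0 < \<sigma>" "\<sigma> < h" "\<phi> h - \<phi> 0 = h * \<phi>' \<sigma>"
    using MVT2[OF \<open>h > 0\<close>, of \<phi> \<phi>'] by auto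
  define \<psi> where "\<psi> t = pd i f (p + \<sigma> *\<^sub>R axis i 1 + t *\<^sub>R axis j 1)" for t
  have "(\<psi> has_real_derivative pd j (pd i f) (p + \<sigma> *\<^sub>R axis i 1 + t *\<^sub>R axis j 1)) (at t)" for t
    unfolding \<psi>_def by (intro pd_has_real_derivative fi)
  then obtain \<tau> where \<tau>: "0 < \<tau>" "\<tau> < h"
      "\<psi> h - \<psi> 0 = h * pd j (pd i f) (p + \<sigma> *\<^sub>R axis i 1 + \<tau> *\<^sub>R axis j 1)"
    using MVT2[OF \<open>h > 0\<close>, of \<psi> "\<lambda>t. pd j (pd i f) (p + \<sigma> *\<^sub>R axis i 1 + t *\<^sub>R axis j 1)"]
    by auto
  have "\<phi>' \<sigma> = \<psi> h - \<psi> 0"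
    unfolding \<phi>'_def \<psi>_def by (simp add: ac_simps)
  moreover have "mixed_difference i j h f p = \<phi> h - \<phi> 0"
    unfolding \<phi>_def mixed_difference_def by (simp add: ac_simps)
  ultimately show ?thesis
    using that \<sigma> \<tau> by (metis mult.assoc)
qed

lemma mixed_difference_quotient_tendsto:
  fixes f :: "point \<Rightarrow> real"
  assumes f: "f differentiable_on UNIV" and fi: "pd i f differentiable_on UNIV"
    and cont: "isCont (pd j (pd i f)) p"
  shows "((\<lambda>h. mixed_difference i j h f p / (h * h)) \<longlongrightarrow> pd j (pd i f) p) (at_right 0)"
  unfolding tendsto_iff eventually_at_right[OF zero_less_one]
proof (intro allI impI)
  fix e :: real
  assume "e > 0"
  then obtain d where "d > 0" and d: "\<And>y. dist y p < d \<Longrightarrow> dist (pd j (pd i f) y) (pd j (pd i f) p) < e"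
    using cont unfolding continuous_at_eps_delta by blast
  have "dist (mixed_difference i j h f p / (h * h)) (pd j (pd i f) p) < e" if "0 < h" "h < d / 2" for h
  proof -
    obtain \<sigma> \<tau> where "0 < \<sigma>" "\<sigma> < h" "0 < \<tau>" "\<tau> < h"
      and mvt: "mixed_difference i j h f p = h * h * pd j (pd i f) (p + \<sigma> *\<^sub>R axis i 1 + \<tau> *\<^sub>R axis j 1)"
      using mixed_difference_mvt[OF f fi \<open>0 < h\<close>] by blast
    have "dist (p + \<sigma> *\<^sub>R axis i 1 + \<tau> *\<^sub>R axis j 1) p = norm (\<sigma> *\<^sub>R axis i 1 + \<tau> *\<^sub>R axis j 1 :: point)"
      by (simp add: dist_norm)
    also have "\<dots> \<le> norm (\<sigma> *\<^sub>R (axis i 1 :: point)) + norm (\<tau> *\<^sub>R (axis j 1 :: point))"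
      by (rule norm_triangle_ineq)
    also have "\<dots> < d"
      using \<open>0 < \<sigma>\<close> \<open>\<sigma> < h\<close> \<open>0 < \<tau>\<close> \<open>\<tau> < h\<close> \<open>h < d / 2\<close> by simp
    finally show ?thesis
      using d \<open>0 < h\<close> by (simp add: mvt)
  qed
  then show "\<exists>b>0. \<forall>h>0. h < b \<longrightarrow> dist (mixed_difference i j h f p / (h * h)) (pd j (pd i f) p) < e"
    using \<open>d > 0\<close> by (intro exI[of _ "d / 2"]) auto
qed

lemma pd_commute:
  fixes f :: "point \<Rightarrow> real"
  assumes f: "f differentiable_on UNIV"
    and fi: "pd i f differentiable_on UNIV" and fj: "pd j f differentiable_on UNIV"
    and "isCont (pd i (pd j f)) p" and "isCont (pd j (pd i f)) p"
  shows "pd i (pd j f) p = pd j (pd i f) p"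
proof -
  have "((\<lambda>h. mixed_difference i j h f p / (h * h)) \<longlongrightarrow> pd j (pd i f) p) (at_right 0)"
    using f fi \<open>isCont (pd j (pd i f)) p\<close> by (rule mixed_difference_quotient_tendsto)
  moreover have "((\<lambda>h. mixed_difference i j h f p / (h * h)) \<longlongrightarrow> pd i (pd j f) p) (at_right 0)"
    using mixed_difference_quotient_tendsto[OF f fj \<open>isCont (pd i (pd j f)) p\<close>]
    unfolding mixed_difference_commute[of j i] .
  ultimately show ?thesis
    by (rule tendsto_unique[OF trivial_limit_at_right_real, symmetric])
qed

lemma smooth_differentiable_on: "smooth f \<Longrightarrow> iter_pd is f differentiable_on UNIV"
  unfolding smooth_def by blast

lemma differentiable_on_UNIV_imp_isCont: "f differentiable_on UNIV \<Longrightarrow> isCont f x"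
  using differentiable_imp_continuous_on continuous_on_eq_continuous_at[OF open_UNIV] by blast

lemma symmetric_matrix_inner_commute:
  fixes N :: "real^'n^'n"
  assumes "transpose N = N"
  shows "a \<bullet> (N *v b) = (N *v a) \<bullet> b"
  by (metis assms dot_lmul_matrix vector_transpose_matrix)

lemma nonpos_quadratic_imp_eq_0:
  fixes a b :: real
  assumes "\<And>t. t * (2 * a + t * b) \<le> 0"
  shows "a = 0"
proof (rule ccontr)
  assume "a \<noteq> 0"
  define c where "c = \<bar>b\<bar> + 1"
  have "c > 0" "2 * c + b > 0" unfolding c_def by (simp_all add: abs_if)
  moreover have "a * a > 0" using \<open>a \<noteq> 0\<close> by (metis not_real_square_gt_zero)
  ultimately have "0 < a * a * (2 * c + b) / (c * c)"
    by (meson divide_pos_pos mult_pos_pos)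
  also have "\<dots> = (a / c) * (2 * a + (a / c) * b)"
    using \<open>c > 0\<close> by (simp add: field_simps)
  also have "\<dots> \<le> 0" by (rule assms)
  finally show False by simp
qed

lemma symmetric_matrix_maximizer_is_eigenvector:
  fixes N :: "real^'n^'n"
  assumes sym: "transpose N = N" and W: "subspace W" and inv: "\<And>y. y \<in> W \<Longrightarrow> N *v y \<in> W"
    and x: "x \<in> W" "x \<bullet> x = 1"
    and max: "\<And>y. y \<in> W \<Longrightarrow> y \<bullet> (N *v y) \<le> (x \<bullet> (N *v x)) * (y \<bullet> y)"
  shows "N *v x = (x \<bullet> (N *v x)) *\<^sub>R x"
proof -
  define l where "l = x \<bullet> (N *v x)"
  define r where "r = N *v x - l *\<^sub>R x"
  have "r \<in> W" unfolding r_def using W x inv by (simp add: subspace_diff subspace_scale)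
  have rr: "r \<bullet> r = r \<bullet> (N *v x) - l * (x \<bullet> r)"
    unfolding r_def by (simp add: algebra_simps inner_commute)
  have "t * (2 * (r \<bullet> r) + t * (r \<bullet> (N *v r) - l * (r \<bullet> r))) \<le> 0" for t
  proof -
    have q_expand: "(x + t *\<^sub>R r) \<bullet> (N *v (x + t *\<^sub>R r))
        = l + 2 * t * (r \<bullet> (N *v x)) + t * t * (r \<bullet> (N *v r))"
      unfolding l_def using symmetric_matrix_inner_commute[OF sym, of x r]
      by (simp add: algebra_simps inner_commute matrix_vector_right_distrib)
    have norm_expand: "(x + t *\<^sub>R r) \<bullet> (x + t *\<^sub>R r) = 1 + 2 * t * (x \<bullet> r) + t * t * (r \<bullet> r)"
      using x(2) by (simp add: algebra_simps inner_commute)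
    have "t * (2 * (r \<bullet> r) + t * (r \<bullet> (N *v r) - l * (r \<bullet> r)))
        = (x + t *\<^sub>R r) \<bullet> (N *v (x + t *\<^sub>R r)) - l * ((x + t *\<^sub>R r) \<bullet> (x + t *\<^sub>R r))"
      unfolding q_expand norm_expand rr by (simp add: algebra_simps)
    also have "\<dots> \<le> 0"
      using max[of "x + t *\<^sub>R r"] W x \<open>r \<in> W\<close> unfolding l_def
      by (simp add: subspace_add subspace_scale)
    finally show ?thesis .
  qed
  then have "r \<bullet> r = 0" by (rule nonpos_quadratic_imp_eq_0)
  then show ?thesis unfolding r_def l_def by simp
qed

lemma symmetric_matrix_eigenvector_in_invariant_subspace:
  fixes N :: "real^'n^'n"
  assumes sym: "transpose N = N" and W: "subspace W" and inv: "\<And>y. y \<in> W \<Longrightarrow> N *v y \<in> W"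
    and "x0 \<in> W" "x0 \<noteq> 0"
  shows "\<exists>x\<in>W. norm x = 1 \<and> (\<exists>c. N *v x = c *\<^sub>R x)"
proof -
  define K where "K = sphere 0 1 \<inter> W"
  have "compact K" unfolding K_def using closed_subspace[OF W] by (intro compact_Int_closed) auto
  moreover have "x0 /\<^sub>R norm x0 \<in> K" unfolding K_def using \<open>x0 \<in> W\<close> \<open>x0 \<noteq> 0\<close> W by (auto simp: subspace_scale)
  moreover have "continuous_on K (\<lambda>x. x \<bullet> (N *v x))"
    by (intro continuous_intros)
  ultimately obtain x where "x \<in> K" and x_max: "\<And>y. y \<in> K \<Longrightarrow> y \<bullet> (N *v y) \<le> x \<bullet> (N *v x)"
    using continuous_attains_sup[of K "\<lambda>x. x \<bullet> (N *v x)"] by blast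
  then have "x \<in> W" "norm x = 1" unfolding K_def by auto
  have "y \<bullet> (N *v y) \<le> (x \<bullet> (N *v x)) * (y \<bullet> y)" if "y \<in> W" for y
  proof (cases "y = 0")
    case False
    have "y /\<^sub>R norm y \<in> K" unfolding K_def using \<open>y \<in> W\<close> W False by (auto simp: subspace_scale)
    moreover have "(y /\<^sub>R norm y) \<bullet> (N *v (y /\<^sub>R norm y)) = (y \<bullet> (N *v y)) / (norm y)\<^sup>2"
      by (simp add: matrix_vector_mult_scaleR power2_eq_square divide_inverse)
    ultimately have "(y \<bullet> (N *v y)) / (norm y)\<^sup>2 \<le> x \<bullet> (N *v x)"
      using x_max by metis
    then show ?thesis
      using False by (simp add: divide_le_eq power2_norm_eq_inner)
  qed simp
  then have "N *v x = (x \<bullet> (N *v x)) *\<^sub>R x"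
    using \<open>x \<in> W\<close> \<open>norm x = 1\<close>
    by (intro symmetric_matrix_maximizer_is_eigenvector[OF sym W inv]) (simp_all add: norm_eq_1)
  with \<open>x \<in> W\<close> \<open>norm x = 1\<close> show ?thesis by blast
qed

lemma symmetric_matrix_orthogonal_eigenvector:
  fixes N :: "real^'n^'n"
  assumes sym: "transpose N = N" and "finite S" "card S < CARD('n)"
    and eig: "\<And>x. x \<in> S \<Longrightarrow> \<exists>c. N *v x = c *\<^sub>R x"
  shows "\<exists>w. (\<forall>x\<in>S. orthogonal x w) \<and> norm w = 1 \<and> (\<exists>c. N *v w = c *\<^sub>R w)"
proof -
  define W where "W = {y. \<forall>x\<in>S. orthogonal x y}"
  have "dim S < DIM(real^'n)" using dim_le_card'[OF \<open>finite S\<close>] \<open>card S < CARD('n)\<close> by simp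
  then obtain x0 where "x0 \<noteq> 0" "\<And>y. y \<in> span S \<Longrightarrow> orthogonal x0 y"
    using orthogonal_to_subspace_exists by blast
  then have "x0 \<in> W" unfolding W_def using span_base by (auto simp: orthogonal_commute)
  have "N *v y \<in> W" if "y \<in> W" for y
    unfolding W_def
  proof (intro CollectI ballI)
    fix x assume "x \<in> S"
    then obtain c where "N *v x = c *\<^sub>R x" using eig by blast
    then have "x \<bullet> (N *v y) = c * (x \<bullet> y)"
      by (simp add: symmetric_matrix_inner_commute[OF sym])
    with \<open>x \<in> S\<close> \<open>y \<in> W\<close> show "orthogonal x (N *v y)" unfolding W_def orthogonal_def by simp
  qed
  moreover have "subspace W" unfolding W_def by (rule subspace_orthogonal_to_vectors)
  ultimately show ?thesis
    using symmetric_matrix_eigenvector_in_invariant_subspace[OF sym _ _ \<open>x0 \<in> W\<close> \<open>x0 \<noteq> 0\<close>]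
    unfolding W_def by blast
qed

lemma matrix_inv_eqI:
  fixes A B :: "'a::semiring_1^'n^'n"
  assumes "A ** B = mat 1" "B ** A = mat 1"
  shows "matrix_inv A = B"
proof -
  have "A ** matrix_inv A = mat 1 \<and> matrix_inv A ** A = mat 1"
    unfolding matrix_inv_def by (rule someI_ex) (use assms in blast)
  then have "matrix_inv A = matrix_inv A ** (A ** B)"
    using assms by (simp add: matrix_mul_rid)
  also have "\<dots> = B"
    using \<open>A ** matrix_inv A = mat 1 \<and> matrix_inv A ** A = mat 1\<close>
    by (simp add: matrix_mul_assoc matrix_mul_lid)
  finally show ?thesis .
qed

lemma idx_4_eq_0 [simp]: "(4::idx) = 0"
  by simp

lemma spatial_orthonormal_eigenvectors:
  fixes G :: "real^4^4"
  assumes row: "\<And>j. j \<noteq> 0 \<Longrightarrow> G $ 0 $ j = 0"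
    and sym: "\<And>i j. i \<noteq> 0 \<Longrightarrow> j \<noteq> 0 \<Longrightarrow> G $ i $ j = G $ j $ i"
  obtains w :: "idx \<Rightarrow> real^4" and l :: "idx \<Rightarrow> real"
  where "\<And>a. a \<noteq> 0 \<Longrightarrow> w a $ 0 = 0"
    and "\<And>a b. a \<noteq> 0 \<Longrightarrow> b \<noteq> 0 \<Longrightarrow> w a \<bullet> w b = (if a = b then 1 else 0)"
    and "\<And>a. a \<noteq> 0 \<Longrightarrow> G *v w a = l a *\<^sub>R w a"
proof -
  define N :: "real^4^4" where "N = (\<chi> i j. if i = 0 \<or> j = 0 then 0 else G $ i $ j)"
  have N_sym: "transpose N = N"
    unfolding N_def transpose_def vec_eq_iff using sym by auto
  have G_eq_N: "G *v y = N *v y" if "y $ 0 = 0" for y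
    unfolding N_def using that row by (simp add: vec_eq_iff forall_4 matrix_vector_mult_def sum_4)
  \<comment> \<open>Seeding with the time axis, which N annihilates, makes all further eigenvectors spatial.\<close>
  define e0 :: "real^4" where "e0 = axis 0 1"
  have "N *v e0 = 0 *\<^sub>R e0"
    unfolding N_def e0_def by (simp add: vec_eq_iff matrix_vector_mult_def axis_def sum_4)
  then obtain w1 where w1: "orthogonal e0 w1" "norm w1 = 1" "\<exists>c. N *v w1 = c *\<^sub>R w1"
    using symmetric_matrix_orthogonal_eigenvector[OF N_sym, of "{e0}"] by auto
  have "card {e0, w1} < CARD(idx)" by (simp add: card_insert_if)
  then obtain w2 where w2: "orthogonal e0 w2" "orthogonal w1 w2" "norm w2 = 1" "\<exists>c. N *v w2 = c *\<^sub>R w2"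
    using \<open>N *v e0 = 0 *\<^sub>R e0\<close> w1 symmetric_matrix_orthogonal_eigenvector[OF N_sym, of "{e0, w1}"]
    by blast
  have "card {e0, w1, w2} < CARD(idx)" by (simp add: card_insert_if)
  then obtain w3 where w3: "orthogonal e0 w3" "orthogonal w1 w3" "orthogonal w2 w3" "norm w3 = 1"
      "\<exists>c. N *v w3 = c *\<^sub>R w3"
    using \<open>N *v e0 = 0 *\<^sub>R e0\<close> w1 w2 symmetric_matrix_orthogonal_eigenvector[OF N_sym, of "{e0, w1, w2}"]
    by blast
  define w where "w a = (if a = 1 then w1 else if a = 2 then w2 else w3)" for a :: idx
  have spatial: "orthogonal e0 v \<Longrightarrow> v $ 0 = 0" for v
    unfolding e0_def orthogonal_def by (simp add: inner_axis')
  have "\<forall>a. a \<noteq> 0 \<longrightarrow> w a $ 0 = 0"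
    unfolding forall_4 w_def using spatial w1 w2 w3 by simp
  moreover have "\<forall>a b. a \<noteq> 0 \<longrightarrow> b \<noteq> 0 \<longrightarrow> w a \<bullet> w b = (if a = b then 1 else 0)"
    unfolding forall_4 w_def using w1 w2 w3
    by (simp add: orthogonal_def norm_eq_1 inner_commute)
  moreover have "\<forall>a. a \<noteq> 0 \<longrightarrow> (\<exists>c. G *v w a = c *\<^sub>R w a)"
    unfolding forall_4 w_def using spatial w1 w2 w3 G_eq_N by simp
  ultimately show ?thesis
    using that by metis
qed

definition metric_pairing :: "real^4^4 \<Rightarrow> real^4 \<Rightarrow> real^4 \<Rightarrow> real" where
  "metric_pairing gm x y = (\<Sum>m\<in>UNIV. \<Sum>n\<in>UNIV. gm $ m $ n * x $ m * y $ n)"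

lemma hawking_ellis_type_I_of_frame:
  fixes e :: "idx \<Rightarrow> real^4"
  assumes "\<And>a b. metric_pairing gm (e a) (e b) = eta a b" and "\<And>a. T *v e a = ev a *\<^sub>R e a"
  shows "hawking_ellis_type_I gm T"
proof -
  define E :: "real^4^4" where "E = (\<chi> m a. e a $ m)"
  have "column a E = e a" for a
    unfolding E_def column_def by (simp add: vec_eq_iff)
  then show ?thesis
    unfolding hawking_ellis_type_I_def using assms
    by (intro exI[of _ E] exI[of _ ev]) (simp add: metric_pairing_def E_def)
qed

lemma hawking_ellis_type_I_scaleR:
  assumes "hawking_ellis_type_I gm T"
  shows "hawking_ellis_type_I gm (c *\<^sub>R T)"
proof -
  obtain E ev where "\<forall>a b. (\<Sum>m\<in>UNIV. \<Sum>n\<in>UNIV. gm $ m $ n * E $ m $ a * E $ n $ b) = eta a b"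
    and "\<forall>a. T *v column a E = ev a *\<^sub>R column a E"
    using assms unfolding hawking_ellis_type_I_def by blast
  then show ?thesis
    unfolding hawking_ellis_type_I_def
    by (intro exI[of _ E] exI[of _ "\<lambda>a. c * ev a"]) (simp add: scaleR_matrix_vector_assoc[symmetric])
qed

lemma sum_spatial: "sum f (UNIV - {0::idx}) = f 1 + f 2 + f 3"
proof -
  have "UNIV - {0::idx} = {1, 2, 3}" using UNIV_4 by auto
  then show ?thesis by (simp add: ac_simps)
qed

definition irrot_metric :: "(point \<Rightarrow> real) \<Rightarrow> point \<Rightarrow> real^4^4" where
  "irrot_metric \<Phi> = adm_flat_metric (\<lambda>q. 1) (\<lambda>q k. - pd k \<Phi> q)"

definition irrot_metric_inv :: "(point \<Rightarrow> real) \<Rightarrow> point \<Rightarrow> real^4^4" where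
  "irrot_metric_inv \<Phi> q = (\<chi> \<mu> \<nu>.
     if \<mu> = 0 \<and> \<nu> = 0 then -1
     else if \<mu> = 0 then pd \<nu> \<Phi> q
     else if \<nu> = 0 then pd \<mu> \<Phi> q
     else (if \<mu> = \<nu> then 1 else 0) - pd \<mu> \<Phi> q * pd \<nu> \<Phi> q)"

lemma irrot_metric_entry:
  "irrot_metric \<Phi> q $ \<mu> $ \<nu> =
     (if \<mu> = 0 \<and> \<nu> = 0 then -1 + (pd 1 \<Phi> q * pd 1 \<Phi> q + pd 2 \<Phi> q * pd 2 \<Phi> q + pd 3 \<Phi> q * pd 3 \<Phi> q)
      else if \<mu> = 0 then pd \<nu> \<Phi> q
      else if \<nu> = 0 then pd \<mu> \<Phi> q
      else if \<mu> = \<nu> then 1 else 0)"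
  by (simp add: irrot_metric_def adm_flat_metric_def sum_spatial power2_eq_square)

lemma inv_metric_irrot_metric: "inv_metric (irrot_metric \<Phi>) q = irrot_metric_inv \<Phi> q"
  unfolding inv_metric_def
  by (rule matrix_inv_eqI;
      simp add: vec_eq_iff matrix_matrix_mult_def mat_def irrot_metric_entry irrot_metric_inv_def
        forall_4 sum_4; simp add: algebra_simps)

(* The unit normal (1, beta^i) of the slices t = const, with beta^i = - d_i Phi. *)
definition irrot_normal :: "(point \<Rightarrow> real) \<Rightarrow> point \<Rightarrow> real^4" where
  "irrot_normal \<Phi> p = (\<chi> \<mu>. if \<mu> = 0 then 1 else - pd \<mu> \<Phi> p)"

lemma irrot_normal_time [simp]: "irrot_normal \<Phi> p $ 0 = 1"
  by (simp add: irrot_normal_def)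

lemma metric_pairing_irrot_normal_left:
  "metric_pairing (irrot_metric \<Phi> p) (irrot_normal \<Phi> p) y = - y $ 0"
  by (simp add: metric_pairing_def sum_4 irrot_metric_entry irrot_normal_def algebra_simps)

lemma metric_pairing_irrot_normal_right:
  "metric_pairing (irrot_metric \<Phi> p) x (irrot_normal \<Phi> p) = - x $ 0"
  by (simp add: metric_pairing_def sum_4 irrot_metric_entry irrot_normal_def algebra_simps)

lemma metric_pairing_irrot_spatial:
  "x $ 0 = 0 \<Longrightarrow> y $ 0 = 0 \<Longrightarrow> metric_pairing (irrot_metric \<Phi> p) x y = x \<bullet> y"
  by (simp add: metric_pairing_def sum_4 irrot_metric_entry inner_vec_def algebra_simps)

definition irrot_christoffel :: "(point \<Rightarrow> real) \<Rightarrow> idx \<Rightarrow> idx \<Rightarrow> idx \<Rightarrow> point \<Rightarrow> real" where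
  "irrot_christoffel \<Phi> l m n = (\<lambda>q.
   if l = 0 then
     (if m = 0 \<and> n = 0 then - (\<Sum>k\<in>{1,2,3}. \<Sum>j\<in>{1,2,3}. pd k \<Phi> q * pd j \<Phi> q * pd k (pd j \<Phi>) q)
      else if m = 0 then - (\<Sum>k\<in>{1,2,3}. pd k \<Phi> q * pd n (pd k \<Phi>) q)
      else if n = 0 then - (\<Sum>k\<in>{1,2,3}. pd k \<Phi> q * pd m (pd k \<Phi>) q)
      else - pd m (pd n \<Phi>) q)
    else
     (if m = 0 \<and> n = 0 then pd 0 (pd l \<Phi>) q - (\<Sum>k\<in>{1,2,3}. pd k \<Phi> q * pd l (pd k \<Phi>) q)
          + pd l \<Phi> q * (\<Sum>k\<in>{1,2,3}. \<Sum>j\<in>{1,2,3}. pd k \<Phi> q * pd j \<Phi> q * pd k (pd j \<Phi>) q)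
      else if m = 0 then pd l \<Phi> q * (\<Sum>k\<in>{1,2,3}. pd k \<Phi> q * pd n (pd k \<Phi>) q)
      else if n = 0 then pd l \<Phi> q * (\<Sum>k\<in>{1,2,3}. pd k \<Phi> q * pd m (pd k \<Phi>) q)
      else pd l \<Phi> q * pd m (pd n \<Phi>) q))"

definition irrot_spatial_ricci :: "(point \<Rightarrow> real) \<Rightarrow> point \<Rightarrow> idx \<Rightarrow> idx \<Rightarrow> real" where
  "irrot_spatial_ricci \<Phi> p k j =
     (\<Sum>l\<in>{1,2,3}. pd l \<Phi> p * pd j (pd k (pd l \<Phi>)) p)
     + pd j (pd k \<Phi>) p * (\<Sum>l\<in>{1,2,3}. pd l (pd l \<Phi>) p) - pd 0 (pd j (pd k \<Phi>)) p"

context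
  fixes \<Phi> :: "point \<Rightarrow> real"
  assumes smooth: "smooth \<Phi>"
begin

lemma differentiable_on_pd [simp]:
  "\<Phi> differentiable_on UNIV"
  "pd i \<Phi> differentiable_on UNIV"
  "pd i (pd j \<Phi>) differentiable_on UNIV"
  "pd i (pd j (pd k \<Phi>)) differentiable_on UNIV"
  using smooth_differentiable_on[OF smooth, of "[]"] smooth_differentiable_on[OF smooth, of "[i]"]
    smooth_differentiable_on[OF smooth, of "[i, j]"] smooth_differentiable_on[OF smooth, of "[i, j, k]"]
  by simp_all

lemma pd_pd_commute: "pd i (pd j \<Phi>) = pd j (pd i \<Phi>)"
  by (rule ext, rule pd_commute) (simp_all add: differentiable_on_UNIV_imp_isCont)

lemma pd_pd_pd_commute: "pd i (pd j (pd k \<Phi>)) = pd j (pd i (pd k \<Phi>))"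
  by (rule ext, rule pd_commute) (simp_all add: differentiable_on_UNIV_imp_isCont)

lemma christoffel_irrot_metric: "christoffel (irrot_metric \<Phi>) q l m n = irrot_christoffel \<Phi> l m n q"
proof -
  have "\<forall>l m n. christoffel (irrot_metric \<Phi>) q l m n = irrot_christoffel \<Phi> l m n q"
    unfolding christoffel_def inv_metric_irrot_metric forall_4
    by (simp add: irrot_christoffel_def sum_4 irrot_metric_inv_def irrot_metric_def adm_flat_metric_def
        sum_spatial power2_eq_square pd_pd_commute pd_pd_pd_commute algebra_simps)
  then show ?thesis by blast
qed

lemma ricci_irrot_metric_spatial:
  "k \<noteq> 0 \<Longrightarrow> j \<noteq> 0 \<Longrightarrow> ricci (irrot_metric \<Phi>) p k j = irrot_spatial_ricci \<Phi> p k j"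
proof -
  have "\<forall>k j. k \<noteq> 0 \<longrightarrow> j \<noteq> 0 \<longrightarrow> ricci (irrot_metric \<Phi>) p k j = irrot_spatial_ricci \<Phi> p k j"
    unfolding forall_4 ricci_def riemann_def sum_4 christoffel_irrot_metric
    by (simp add: irrot_christoffel_def irrot_spatial_ricci_def sum_4 pd_pd_commute pd_pd_pd_commute algebra_simps)
  then show "k \<noteq> 0 \<Longrightarrow> j \<noteq> 0 \<Longrightarrow> ?thesis" by blast
qed

lemma ricci_irrot_metric_time_space:
  "j \<noteq> 0 \<Longrightarrow> ricci (irrot_metric \<Phi>) p 0 j = (\<Sum>k\<in>{1,2,3}. pd k \<Phi> p * irrot_spatial_ricci \<Phi> p k j)"
proof -
  have "\<forall>j. j \<noteq> 0 \<longrightarrow> ricci (irrot_metric \<Phi>) p 0 j = (\<Sum>k\<in>{1,2,3}. pd k \<Phi> p * irrot_spatial_ricci \<Phi> p k j)"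
    unfolding forall_4 ricci_def riemann_def sum_4 christoffel_irrot_metric
    by (simp add: irrot_christoffel_def irrot_spatial_ricci_def sum_4 pd_pd_commute pd_pd_pd_commute algebra_simps)
  then show "j \<noteq> 0 \<Longrightarrow> ?thesis" by blast
qed

lemma ricci_irrot_metric_space_time:
  "j \<noteq> 0 \<Longrightarrow> ricci (irrot_metric \<Phi>) p j 0 = (\<Sum>k\<in>{1,2,3}. pd k \<Phi> p * irrot_spatial_ricci \<Phi> p k j)"
proof -
  have "\<forall>j. j \<noteq> 0 \<longrightarrow> ricci (irrot_metric \<Phi>) p j 0 = (\<Sum>k\<in>{1,2,3}. pd k \<Phi> p * irrot_spatial_ricci \<Phi> p k j)"
    unfolding forall_4 ricci_def riemann_def sum_4 christoffel_irrot_metric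
    by (simp add: irrot_christoffel_def irrot_spatial_ricci_def sum_4 pd_pd_commute pd_pd_pd_commute algebra_simps)
  then show "j \<noteq> 0 \<Longrightarrow> ?thesis" by blast
qed

lemma irrot_spatial_ricci_sym: "irrot_spatial_ricci \<Phi> p k j = irrot_spatial_ricci \<Phi> p j k"
  unfolding irrot_spatial_ricci_def by (simp add: pd_pd_commute pd_pd_pd_commute)

lemmas ricci_irrot_metric =
  ricci_irrot_metric_spatial ricci_irrot_metric_time_space ricci_irrot_metric_space_time

lemma einstein_mixed_irrot_time_row:
  "j \<noteq> 0 \<Longrightarrow> einstein_mixed (irrot_metric \<Phi>) p $ 0 $ j = 0"
proof -
  have "\<forall>j. j \<noteq> 0 \<longrightarrow> einstein_mixed (irrot_metric \<Phi>) p $ 0 $ j = 0"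
    unfolding forall_4 einstein_mixed_def einstein_def inv_metric_irrot_metric matrix_matrix_mult_def
    by (simp add: ricci_irrot_metric sum_4 irrot_metric_inv_def irrot_metric_entry algebra_simps)
  then show "j \<noteq> 0 \<Longrightarrow> ?thesis" by blast
qed

lemma einstein_mixed_irrot_spatial_sym:
  "i \<noteq> 0 \<Longrightarrow> j \<noteq> 0 \<Longrightarrow> einstein_mixed (irrot_metric \<Phi>) p $ i $ j = einstein_mixed (irrot_metric \<Phi>) p $ j $ i"
proof -
  have "\<forall>i j. i \<noteq> 0 \<longrightarrow> j \<noteq> 0 \<longrightarrow>
      einstein_mixed (irrot_metric \<Phi>) p $ i $ j = einstein_mixed (irrot_metric \<Phi>) p $ j $ i"
    unfolding forall_4 einstein_mixed_def einstein_def inv_metric_irrot_metric matrix_matrix_mult_def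
    by (simp add: ricci_irrot_metric sum_4 irrot_metric_inv_def irrot_metric_entry algebra_simps
        irrot_spatial_ricci_sym[of p 1 2] irrot_spatial_ricci_sym[of p 1 3] irrot_spatial_ricci_sym[of p 2 3])
  then show "i \<noteq> 0 \<Longrightarrow> j \<noteq> 0 \<Longrightarrow> ?thesis" by blast
qed

lemma einstein_mixed_irrot_normal:
  "einstein_mixed (irrot_metric \<Phi>) p *v irrot_normal \<Phi> p
     = einstein_mixed (irrot_metric \<Phi>) p $ 0 $ 0 *\<^sub>R irrot_normal \<Phi> p"
  unfolding vec_eq_iff forall_4 einstein_mixed_def einstein_def inv_metric_irrot_metric
    matrix_matrix_mult_def matrix_vector_mult_def
  by (simp add: ricci_irrot_metric irrot_normal_def sum_4 irrot_metric_inv_def irrot_metric_entry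
      irrot_spatial_ricci_sym[of p 1 2] irrot_spatial_ricci_sym[of p 1 3] irrot_spatial_ricci_sym[of p 2 3]
      algebra_simps add_divide_distrib diff_divide_distrib)

lemma einstein_mixed_irrot_type_I:
  "hawking_ellis_type_I (irrot_metric \<Phi> p) (einstein_mixed (irrot_metric \<Phi>) p)"
proof -
  let ?G = "einstein_mixed (irrot_metric \<Phi>) p"
  obtain w :: "idx \<Rightarrow> real^4" and l :: "idx \<Rightarrow> real"
    where w_spatial: "\<And>a. a \<noteq> 0 \<Longrightarrow> w a $ 0 = 0"
      and w_orthonormal: "\<And>a b. a \<noteq> 0 \<Longrightarrow> b \<noteq> 0 \<Longrightarrow> w a \<bullet> w b = (if a = b then 1 else 0)"
      and w_eigen: "\<And>a. a \<noteq> 0 \<Longrightarrow> ?G *v w a = l a *\<^sub>R w a"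
    using spatial_orthonormal_eigenvectors[OF einstein_mixed_irrot_time_row einstein_mixed_irrot_spatial_sym]
    by metis
  define e where "e a = (if a = 0 then irrot_normal \<Phi> p else w a)" for a
  define ev where "ev a = (if a = 0 then ?G $ 0 $ 0 else l a)" for a
  show ?thesis
  proof (rule hawking_ellis_type_I_of_frame)
    show "metric_pairing (irrot_metric \<Phi> p) (e a) (e b) = eta a b" for a b
      using w_spatial w_orthonormal
      by (simp add: e_def eta_def metric_pairing_irrot_normal_left metric_pairing_irrot_normal_right
          metric_pairing_irrot_spatial)
    show "?G *v e a = ev a *\<^sub>R e a" for a
      using w_eigen einstein_mixed_irrot_normal by (simp add: e_def ev_def)
  qed
qed

end

theorem proposition2:
  fixes \<Phi> :: "real^4 \<Rightarrow> real" and \<kappa> :: real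
  assumes "\<kappa> > 0"
    and "smooth \<Phi>"
  shows "\<forall>p. hawking_ellis_type_I
           (adm_flat_metric (\<lambda>q. 1) (\<lambda>q k. - pd k \<Phi> q) p)
           ((1 / \<kappa>) *\<^sub>R einstein_mixed (adm_flat_metric (\<lambda>q. 1) (\<lambda>q k. - pd k \<Phi> q)) p)"
  using einstein_mixed_irrot_type_I[OF \<open>smooth \<Phi>\<close>] hawking_ellis_type_I_scaleR
  unfolding irrot_metric_def by blast

end
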